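(* Let $p$ be an odd prime, $q\in\mathbb{C}_p$ with $|1-q|_p<p^{-1/(p-1)}$, and let $\chi$ be a primitive Dirichlet character with conductor $p$. Then for every integer $n\ge0$, $$\frac{2}{[2]_q}E_{n,\chi,q}\equiv\sum_{a=0}^{p-1}\chi(a)(-1)^a[a]_q^n\pmod{[p]_q},$$ i.e. $\left|\frac{2}{[2]_q}E_{n,\chi,q}-\sum_{a=0}^{p-1}\chi(a)(-1)^a[a]_q^n\right|_p\le|[p]_q|_p$.
   Context: $\mathbb{C}_p$ is the completion of an algebraic closure of $\mathbb{Q}_p$, with absolute value $|\cdot|_p$ normalized by $|p|_p=1/p$. For $x\in\mathbb{Z}_p$ put $[x]_q=\frac{1-q^x}{1-q}$. For a Dirichlet character $\chi$ of odd conductor $d$, the generalized $q$-Euler numbers are $E_{n,\chi,q}=\frac{[2]_q}{2}\lim_{N\to\infty}\sum_{x=0}^{dp^N-1}\chi(x)(-1)^x[x]_q^n$; equivalently $\sum_{n\ge0}E_{n,\chi,q}\frac{t^n}{n!}=[2]_q\sum_{m\ge0}\chi(m)(-1)^m e^{[m]_qt}$. Here $d=p$. *)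

theory Defs
  imports "HOL-Computational_Algebra.Polynomial" "HOL-Number_Theory.Cong"
begin

text \<open>Since C_p is not available, we work in an arbitrary field K of characteristic 0
 equipped with an absolute value absv that makes K a complete, algebraically closed,
 non-archimedean valued field whose restriction to the rationals is the p-adic absolute
 value normalised by |p| = 1/p.  C_p is such a field.\<close>

definition p_tendsto :: "('a::field \<Rightarrow> real) \<Rightarrow> (nat \<Rightarrow> 'a) \<Rightarrow> 'a \<Rightarrow> bool" where
  "p_tendsto absv f L \<longleftrightarrow> (\<forall>\<epsilon>>0. \<exists>N. \<forall>m\<ge>N. absv (f m - L) < \<epsilon>)"

definition p_lim :: "('a::field \<Rightarrow> real) \<Rightarrow> (nat \<Rightarrow> 'a) \<Rightarrow> 'a" where
  "p_lim absv f = (THE L. p_tendsto absv f L)"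

definition Cp_like :: "nat \<Rightarrow> ('a::field_char_0 \<Rightarrow> real) \<Rightarrow> bool" where
  "Cp_like p absv \<longleftrightarrow>
     (\<forall>x. absv x \<ge> 0) \<and>
     (\<forall>x. absv x = 0 \<longleftrightarrow> x = 0) \<and>
     (\<forall>x y. absv (x * y) = absv x * absv y) \<and>
     (\<forall>x y. absv (x + y) \<le> max (absv x) (absv y)) \<and>
     absv (of_nat p) = 1 / real p \<and>
     (\<forall>f. (\<forall>\<epsilon>>0. \<exists>N. \<forall>m\<ge>N. \<forall>k\<ge>N. absv (f m - f k) < \<epsilon>)
            \<longrightarrow> (\<exists>L. p_tendsto absv f L)) \<and>
     (\<forall>P :: 'a poly. degree P > 0 \<longrightarrow> (\<exists>x. poly P x = 0))"

text \<open>q-number [x]_q = (1 - q^x)/(1 - q) for natural x, written as the geometric sum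
  (which agrees for q \<noteq> 1 and gives the limit value x for q = 1).\<close>
definition qnum :: "'a::field \<Rightarrow> nat \<Rightarrow> 'a" where
  "qnum q x = (\<Sum>i<x. q ^ i)"

definition dirichlet_char :: "(nat \<Rightarrow> 'a::field) \<Rightarrow> nat \<Rightarrow> bool" where
  "dirichlet_char \<chi> d \<longleftrightarrow> d > 0 \<and>
     (\<forall>m. \<chi> (m + d) = \<chi> m) \<and>
     (\<forall>m n. \<chi> (m * n) = \<chi> m * \<chi> n) \<and>
     \<chi> 1 = 1 \<and>
     (\<forall>m. \<chi> m = 0 \<longleftrightarrow> \<not> coprime m d)"

definition primitive_char :: "(nat \<Rightarrow> 'a::field) \<Rightarrow> nat \<Rightarrow> bool" where
  "primitive_char \<chi> d \<longleftrightarrow> dirichlet_char \<chi> d \<and>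
     (\<forall>e. e dvd d \<and> e < d \<longrightarrow>
        \<not> (\<forall>a b. coprime a d \<and> coprime b d \<and> [a = b] (mod e) \<longrightarrow> \<chi> a = \<chi> b))"

definition qEuler :: "('a::field_char_0 \<Rightarrow> real) \<Rightarrow> nat \<Rightarrow> nat \<Rightarrow> (nat \<Rightarrow> 'a) \<Rightarrow> 'a \<Rightarrow> nat \<Rightarrow> 'a" where
  "qEuler absv p d \<chi> q n = qnum q 2 / 2 *
     p_lim absv (\<lambda>N. \<Sum>x<d * p ^ N. \<chi> x * (-1) ^ x * qnum q x ^ n)"

end

theory Submission
  imports Defs "HOL-Number_Theory.Residues"
begin

(* Write g(x) = chi(x) (-1)^x [x]_q^n and S_N = sum_{x < p^(N+1)} g(x), so that
   2/[2]_q E_{n,chi,q} is the limit of S_N.  Everything rests on one estimate for blocks: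
   if M is an odd period of chi and L is odd, then splitting x = a + M y gives
     sum_{x < M L} g(x) - sum_{x < M} g(x) = sum_{y<L} sum_{a<M} (g(a + M y) - (-1)^y g(a)),
   since sum_{y<L} (-1)^y = 1, and every summand is divisible by [M]_q, because
   [a + M y]_q - [a]_q = q^a [M]_q [y]_{q^M}.  With M = p this gives
   |S_N - sum_{a<p} g(a)| <= |[p]_q| for all N; with M = p^(N+1) it gives
   |S_(N+1) - S_N| <= |[p^(N+1)]_q| <= c^(N+1), where c = max(|p|, |1-q|) < 1.
   Hence (S_N) is Cauchy, converges by completeness, and the limit stays in the closed
   ball of radius |[p]_q| around sum_{a<p} g(a). *)

section \<open>Non-archimedean absolute values\<close>

locale nonarch =
  fixes absv :: "'a::field_char_0 \<Rightarrow> real"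
  assumes nonneg: "\<And>x. absv x \<ge> 0"
    and zero_iff: "\<And>x. absv x = 0 \<longleftrightarrow> x = 0"
    and mult: "\<And>x y. absv (x * y) = absv x * absv y"
    and ultra: "\<And>x y. absv (x + y) \<le> max (absv x) (absv y)"
begin

lemma zero [simp]: "absv 0 = 0"
  using zero_iff by blast

lemma one [simp]: "absv 1 = 1"
proof -
  have "absv 1 = absv 1 * absv 1" using mult[of 1 1] by simp
  moreover have "absv 1 \<noteq> 0" using zero_iff by simp
  ultimately show ?thesis by simp
qed

lemma minus [simp]: "absv (- x) = absv x"
proof -
  have "absv (-1) ^ 2 = 1" using mult[of "-1" "-1"] by (simp add: power2_eq_square)
  hence "absv (-1) = 1" using nonneg[of "-1"] power2_eq_1_iff by fastforce
  thus ?thesis using mult[of "-1" x] by simp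
qed

lemma commute: "absv (x - y) = absv (y - x)"
  using minus[of "x - y"] by simp

lemma power: "absv (x ^ n) = absv x ^ n"
  by (induction n) (simp_all add: mult)

lemma of_nat_le_one: "absv (of_nat n) \<le> 1"
proof (induction n)
  case (Suc n)
  have "absv (1 + of_nat n) \<le> max (absv 1) (absv (of_nat n))" by (rule ultra)
  then show ?case using Suc by simp
qed simp

lemma add_le: "absv x \<le> c \<Longrightarrow> absv y \<le> c \<Longrightarrow> absv (x + y) \<le> c"
  using ultra[of x y] by (metis max.bounded_iff order_trans)

lemma sum_le:
  assumes "finite A" "\<And>i. i \<in> A \<Longrightarrow> absv (f i) \<le> c" "0 \<le> c"
  shows "absv (sum f A) \<le> c"
  using assms by (induction A rule: finite_induct) (simp_all add: add_le)

lemma mult_le: "absv x \<le> c \<Longrightarrow> absv y \<le> 1 \<Longrightarrow> absv (x * y) \<le> c"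
  using mult_left_le[of "absv y" "absv x"] nonneg[of x] mult[of x y] by linarith

lemma mult_le': "absv x \<le> 1 \<Longrightarrow> absv y \<le> c \<Longrightarrow> absv (x * y) \<le> c"
  using mult_le[of y c x] by (simp add: mult.commute)

lemma le_one_if_near_one: "absv (1 - q) \<le> 1 \<Longrightarrow> absv q \<le> 1"
  using add_le[of 1 1 "q - 1"] commute[of q 1] by simp

lemma less_if_both_less: "absv x < e \<Longrightarrow> absv y < e \<Longrightarrow> absv (x + y) < e"
  using ultra[of x y] by simp

lemma power_diff_le:
  assumes "absv x \<le> 1" "absv y \<le> 1"
  shows "absv (x ^ n - y ^ n) \<le> absv (x - y)"
proof -
  have "absv (\<Sum>i<n. y ^ (n - Suc i) * x ^ i) \<le> 1"
    using assms by (intro sum_le) (simp_all add: mult power power_le_one nonneg mult_le_one)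
  then show ?thesis
    unfolding power_diff_sumr2 by (intro mult_le) simp_all
qed

lemma two_unit:
  assumes "odd m" "absv (of_nat m) < 1"
  shows "absv 2 = 1"
proof -
  obtain k where k: "m = 2 * k + 1" using assms(1) oddE by blast
  have "(1::'a) = of_nat m + 2 * (- of_nat k)" using k by simp
  hence "1 \<le> max (absv (of_nat m)) (absv (2 * (- of_nat k) :: 'a))"
    using ultra by (metis one)
  moreover have "absv (2 * (- of_nat k) :: 'a) \<le> absv 2"
    using mult_le[of 2 "absv 2" "- of_nat k"] of_nat_le_one[of k] by simp
  ultimately have "absv (2::'a) \<ge> 1" using assms(2) by linarith
  moreover have "absv (2::'a) \<le> 1" using of_nat_le_one[of 2] by simp
  ultimately show ?thesis by simp
qed

section \<open>Limits\<close>

lemma p_tendsto_unique: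
  assumes "p_tendsto absv f L" "p_tendsto absv f L'"
  shows "L' = L"
proof (rule ccontr)
  assume "L' \<noteq> L"
  define e where "e = absv (L' - L)"
  have "e > 0" using \<open>L' \<noteq> L\<close> nonneg[of "L' - L"] zero_iff[of "L' - L"] unfolding e_def by simp
  then obtain N1 N2 where N1: "\<forall>m\<ge>N1. absv (f m - L') < e" and N2: "\<forall>m\<ge>N2. absv (f m - L) < e"
    using assms unfolding p_tendsto_def by meson
  define m where "m = max N1 N2"
  have "absv ((L' - f m) + (f m - L)) < e"
    using N1 N2 commute[of L' "f m"] unfolding m_def by (intro less_if_both_less) simp_all
  then show False unfolding e_def by simp
qed

lemma p_lim_eq:
  assumes "p_tendsto absv f L"
  shows "p_lim absv f = L"
  unfolding p_lim_def
proof (rule the_equality)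
  show "p_tendsto absv f L" by (fact assms)
next
  show "L' = L" if "p_tendsto absv f L'" for L' using assms that by (rule p_tendsto_unique)
qed

lemma p_tendsto_closed_ball:
  assumes lim: "p_tendsto absv f L" and near: "\<And>N. absv (f N - A) \<le> r"
  shows "absv (L - A) \<le> r"
proof (rule ccontr)
  define e where "e = absv (L - A)"
  assume "\<not> ?thesis"
  hence "r < e" unfolding e_def by simp
  moreover have "0 \<le> r" using near[of 0] nonneg[of "f 0 - A"] by linarith
  ultimately obtain N where "\<forall>m\<ge>N. absv (f m - L) < e"
    using lim unfolding p_tendsto_def by (meson le_less_trans)
  then have "absv (f N - L) < e" by simp
  hence "absv ((L - f N) + (f N - A)) < e"
    using near[of N] \<open>r < e\<close> commute[of L "f N"] by (intro less_if_both_less) simp_all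
  then show False unfolding e_def by simp
qed

lemma geometric_cauchy:
  assumes "0 \<le> c" "c \<le> 1" and step: "\<And>N. absv (S (Suc N) - S N) \<le> c ^ Suc N"
    and "k \<le> m"
  shows "absv (S m - S k) \<le> c ^ k"
  using \<open>k \<le> m\<close>
proof (induction m rule: dec_induct)
  case (step m)
  have "c ^ Suc m \<le> c ^ k" using step.hyps assms(1,2) by (intro power_decreasing) auto
  then show ?case
    using add_le[of "S (Suc m) - S m" "c ^ k" "S m - S k"] assms(3)[of m] step.IH by simp
qed (simp add: assms(1))

end

locale complete_nonarch = nonarch +
  assumes complete: "\<And>f. (\<forall>\<epsilon>>0. \<exists>N. \<forall>m\<ge>N. \<forall>k\<ge>N. absv (f m - f k) < \<epsilon>)
                            \<Longrightarrow> (\<exists>L. p_tendsto absv f L)"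
begin

lemma geometric_converges:
  assumes "0 \<le> c" "c < 1" and step: "\<And>N. absv (S (Suc N) - S N) \<le> c ^ Suc N"
  shows "p_tendsto absv S (p_lim absv S)"
proof -
  have "\<exists>N. \<forall>m\<ge>N. \<forall>k\<ge>N. absv (S m - S k) < e" if e: "e > 0" for e
  proof -
    obtain N where N: "c ^ N < e" using real_arch_pow_inv[OF e \<open>c < 1\<close>] by blast
    have bound: "absv (S m - S k) < e" if "k \<le> m" "N \<le> k" for m k
    proof -
      have "absv (S m - S k) \<le> c ^ k" using assms that(1) by (intro geometric_cauchy) auto
      also have "\<dots> \<le> c ^ N" using that(2) assms(1,2) by (intro power_decreasing) auto
      finally show ?thesis using N by simp
    qed
    have "absv (S m - S k) < e" if "m \<ge> N" "k \<ge> N" for m k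
      using bound[of k m] bound[of m k] that commute[of "S m" "S k"] by (cases "k \<le> m") auto
    then show ?thesis by blast
  qed
  then obtain L where "p_tendsto absv S L" using complete by blast
  then show ?thesis using p_lim_eq by simp
qed

end

lemma Cp_like_complete_nonarch: "Cp_like p absv \<Longrightarrow> complete_nonarch absv"
  unfolding Cp_like_def by unfold_locales blast+

section \<open>q-numbers\<close>

lemma qnum_add: "qnum q (a + b) = qnum q a + q ^ a * qnum q b"
  by (induction b) (simp_all add: qnum_def algebra_simps power_add)

lemma qnum_mult: "qnum q (M * y) = qnum q M * qnum (q ^ M) y"
proof (induction y)
  case (Suc y)
  have "qnum q (M * Suc y) = qnum q (M * y) + q ^ (M * y) * qnum q M"
    using qnum_add[of q "M * y" M] by (simp add: add.commute)
  then show ?case using Suc by (simp add: qnum_def algebra_simps power_mult)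
qed (simp add: qnum_def)

lemma one_minus_q_qnum: "(1 - q) * qnum q n = 1 - q ^ n"
  by (simp add: qnum_def one_diff_power_eq)

lemma qnum_shift: "qnum q (a + M * y) - qnum q a = q ^ a * qnum q M * qnum (q ^ M) y"
  by (simp add: qnum_add qnum_mult mult.assoc)

context nonarch
begin

lemma qnum_le_one: "absv q \<le> 1 \<Longrightarrow> absv (qnum q y) \<le> 1"
  unfolding qnum_def by (rule sum_le) (simp_all add: power power_le_one nonneg)

lemma qnum_power_shift_le:
  assumes "absv q \<le> 1"
  shows "absv (qnum q (a + M * y) ^ n - qnum q a ^ n) \<le> absv (qnum q M)"
proof -
  have "absv (q ^ a * qnum q M) \<le> absv (qnum q M)"
    using assms by (intro mult_le') (simp_all add: power power_le_one nonneg)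
  then have "absv (qnum q (a + M * y) - qnum q a) \<le> absv (qnum q M)"
    unfolding qnum_shift
    by (rule mult_le) (use assms in \<open>simp add: qnum_le_one power power_le_one nonneg\<close>)
  moreover have "absv (qnum q (a + M * y) ^ n - qnum q a ^ n) \<le> absv (qnum q (a + M * y) - qnum q a)"
    using assms by (intro power_diff_le qnum_le_one)
  ultimately show ?thesis by linarith
qed

text \<open>[m]_q \<equiv> m (mod 1 - q), hence |[m]_q| \<le> max |m| |1 - q|.\<close>
lemma qnum_le_max:
  assumes "absv (1 - q) \<le> 1"
  shows "absv (qnum q m) \<le> max (absv (of_nat m)) (absv (1 - q))"
proof -
  have "qnum q m - of_nat m = (\<Sum>i<m. q ^ i - 1)" by (simp add: qnum_def sum_subtractf)
  also have "\<dots> = (\<Sum>i<m. - ((1 - q) * qnum q i))" by (simp add: one_minus_q_qnum)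
  finally have eq: "qnum q m = of_nat m + (\<Sum>i<m. - ((1 - q) * qnum q i))"
    by (simp add: algebra_simps)
  have "absv (\<Sum>i<m. - ((1 - q) * qnum q i)) \<le> absv (1 - q)"
    using le_one_if_near_one[OF assms] by (intro sum_le) (simp_all add: mult_le qnum_le_one nonneg)
  then show ?thesis unfolding eq by (rule order_trans[OF ultra max.mono[OF order_refl]])
qed

text \<open>Iterating: |[m^k]_q| \<le> max |m| |1 - q| ^ k, since [m^(k+1)]_q = [m]_q [m^k]_(q^m)
  and |1 - q^m| \<le> |1 - q|.\<close>
lemma qnum_power_le:
  assumes "absv (1 - q) \<le> 1"
  shows "absv (qnum q (m ^ k)) \<le> max (absv (of_nat m)) (absv (1 - q)) ^ k"
  using assms
proof (induction k arbitrary: q)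
  case (Suc k)
  let ?c = "\<lambda>q. max (absv (of_nat m)) (absv (1 - q))"
  have "absv (1 - q ^ m) = absv ((1 - q) * qnum q m)" by (simp add: one_minus_q_qnum)
  also have "\<dots> \<le> absv (1 - q)"
    by (rule mult_le[OF order_refl qnum_le_one[OF le_one_if_near_one[OF Suc.prems]]])
  finally have near: "absv (1 - q ^ m) \<le> absv (1 - q)" .
  then have "absv (qnum (q ^ m) (m ^ k)) \<le> ?c (q ^ m) ^ k" using Suc by simp
  also have "\<dots> \<le> ?c q ^ k" using near by (intro power_mono) (auto simp: nonneg le_max_iff_disj)
  finally have "absv (qnum q m) * absv (qnum (q ^ m) (m ^ k)) \<le> ?c q * ?c q ^ k"
    using qnum_le_max[OF Suc.prems] by (intro mult_mono) (auto simp: nonneg le_max_iff_disj)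
  then show ?case by (simp add: qnum_mult mult)
qed (simp add: qnum_def)

lemma qnum_two_nonzero:
  assumes "absv (1 - q) < 1" "absv 2 = 1"
  shows "qnum q 2 \<noteq> 0"
proof
  assume "qnum q 2 = 0"
  hence "q = -1" by (simp add: qnum_def eval_nat_numeral add_eq_0_iff)
  then show False using assms by simp
qed

end

section \<open>Dirichlet characters\<close>

lemma dirichlet_char_periodic:
  assumes "dirichlet_char \<chi> d"
  shows "\<chi> (m + d * k) = \<chi> m"
proof (induction k)
  case (Suc k)
  have "m + d * Suc k = (m + d * k) + d" by simp
  then show ?case using Suc assms unfolding dirichlet_char_def by metis
qed simp

context nonarch
begin

text \<open>Character values are roots of unity or zero (Euler's theorem), so they have absolute value at most 1.\<close>
lemma dirichlet_char_le_one:
  assumes "dirichlet_char \<chi> d"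
  shows "absv (\<chi> a) \<le> 1"
proof (cases "coprime a d")
  case False
  then have "\<chi> a = 0" using assms unfolding dirichlet_char_def by blast
  then show ?thesis by simp
next
  case True
  have mod_eq: "\<chi> m = \<chi> (m mod d)" for m
    using dirichlet_char_periodic[OF assms, of "m mod d" "m div d"] by simp
  have pow: "\<chi> (a ^ k) = \<chi> a ^ k" for k
    using assms unfolding dirichlet_char_def by (induction k) simp_all
  have "a ^ totient d mod d = 1 mod d" using euler_theorem[OF True] unfolding cong_def .
  hence "\<chi> a ^ totient d = 1"
    using mod_eq[of "a ^ totient d"] mod_eq[of 1] pow assms unfolding dirichlet_char_def by simp
  hence "absv (\<chi> a) ^ totient d = 1" using power by (metis one)
  moreover have "totient d > 0" using assms unfolding dirichlet_char_def by simp
  ultimately show ?thesis using nonneg power_eq_imp_eq_base[of "absv (\<chi> a)" "totient d" 1] by simp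
qed

end

section \<open>The block estimate\<close>

lemma alternating_sum_odd: "odd L \<Longrightarrow> (\<Sum>y<L. (-1::'a::comm_ring_1) ^ y) = 1"
proof -
  assume "odd L"
  then obtain k where "L = Suc (2 * k)" by (metis oddE Suc_eq_plus1)
  moreover have "(\<Sum>y<Suc (2 * k). (-1::'a) ^ y) = 1" by (induction k) simp_all
  ultimately show ?thesis by simp
qed

lemma sum_lessThan_mult: "sum f {..<(m::nat) * l} = (\<Sum>y<l. \<Sum>a<m. f (a + m * y))"
proof -
  have "sum f {..<m * l} = (\<Sum>y<l. sum f {y * m..<y * m + m})"
    using sum.nat_group[of f m l] by (simp add: mult.commute)
  also have "\<dots> = (\<Sum>y<l. \<Sum>a<m. f (a + m * y))"
  proof (rule sum.cong[OF refl])
    fix y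
    show "sum f {y * m..<y * m + m} = (\<Sum>a<m. f (a + m * y))"
      using sum.shift_bounds_nat_ivl[of f 0 "y * m" m]
      by (simp add: atLeast0LessThan add.commute mult.commute)
  qed
  finally show ?thesis .
qed

context nonarch
begin

lemma block_estimate:
  assumes per: "\<And>a y. w (a + M * y) = w a" and "odd M" "odd L"
    and w_le: "\<And>a. absv (w a) \<le> 1" and "absv q \<le> 1"
  shows "absv ((\<Sum>x<M * L. w x * (-1) ^ x * qnum q x ^ n) - (\<Sum>x<M. w x * (-1) ^ x * qnum q x ^ n))
           \<le> absv (qnum q M)"
proof -
  define g where "g x = w x * (-1) ^ x * qnum q x ^ n" for x
  have term_eq: "g (a + M * y) - (-1) ^ y * g a
      = (w a * (-1) ^ a * (-1) ^ y) * (qnum q (a + M * y) ^ n - qnum q a ^ n)" for a y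
  proof -
    have "(-1::'a) ^ (a + M * y) = (-1) ^ a * (-1) ^ y"
      using \<open>odd M\<close> by (simp add: power_add power_mult)
    then show ?thesis unfolding g_def per by (simp add: algebra_simps)
  qed
  have term_le: "absv (g (a + M * y) - (-1) ^ y * g a) \<le> absv (qnum q M)" for a y
    unfolding term_eq using w_le[of a] \<open>absv q \<le> 1\<close>
    by (intro mult_le' qnum_power_shift_le) (simp_all add: mult power mult_le_one nonneg)
  have "(\<Sum>y<L. \<Sum>a<M. (-1) ^ y * g a) = (\<Sum>y<L. (-1) ^ y) * (\<Sum>a<M. g a)"
    by (simp add: sum_product)
  then have "(\<Sum>x<M * L. g x) - (\<Sum>x<M. g x) = (\<Sum>y<L. \<Sum>a<M. g (a + M * y) - (-1) ^ y * g a)"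
    using alternating_sum_odd[OF \<open>odd L\<close>, where 'a = 'a] by (simp add: sum_lessThan_mult sum_subtractf)
  moreover have "absv (\<Sum>y<L. \<Sum>a<M. g (a + M * y) - (-1) ^ y * g a) \<le> absv (qnum q M)"
    by (intro sum_le) (simp_all add: term_le nonneg)
  ultimately show ?thesis unfolding g_def by simp
qed

end

theorem mainTheorem5:
  fixes p :: nat and absv :: "'a::field_char_0 \<Rightarrow> real" and q :: 'a and \<chi> :: "nat \<Rightarrow> 'a"
  assumes "prime p" and "odd p"
    and "Cp_like p absv"
    and "absv (1 - q) < real p powr (- 1 / (real p - 1))"
    and "primitive_char \<chi> p"
  shows "\<forall>n::nat. absv (2 / qnum q 2 * qEuler absv p p \<chi> q n
              - (\<Sum>a<p. \<chi> a * (-1) ^ a * qnum q a ^ n)) \<le> absv (qnum q p)"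
proof
  fix n :: nat
  interpret complete_nonarch absv using Cp_like_complete_nonarch[OF assms(3)] .
  have char: "dirichlet_char \<chi> p" using assms(5) unfolding primitive_char_def by blast
  have abs_p: "absv (of_nat p) = 1 / real p" using assms(3) unfolding Cp_like_def by blast
  have "p \<ge> 3" using assms(1,2) prime_ge_2_nat[of p] by (cases "p = 2") auto
  then have "real p powr (- 1 / (real p - 1)) < 1" by (intro powr_less_one) auto
  then have near: "absv (1 - q) < 1" using assms(4) by linarith
  then have q_le: "absv q \<le> 1" by (simp add: le_one_if_near_one)
  define c where "c = max (absv (of_nat p :: 'a)) (absv (1 - q))"
  have c: "0 \<le> c" "c < 1" using near abs_p \<open>p \<ge> 3\<close> unfolding c_def by (auto simp: le_max_iff_disj)
  define F where "F K = (\<Sum>x<K. \<chi> x * (-1) ^ x * qnum q x ^ n)" for K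
  have period: "\<chi> (a + p ^ Suc j * y) = \<chi> a" for j a y
    using dirichlet_char_periodic[OF char, of a "p ^ j * y"] by (simp add: mult.assoc)
  have block: "absv (F (p ^ Suc j * L) - F (p ^ Suc j)) \<le> absv (qnum q (p ^ Suc j))"
    if "odd L" for j L
    unfolding F_def
    by (rule block_estimate[where w = \<chi> and M = "p ^ Suc j", OF period _ that dirichlet_char_le_one[OF char] q_le]) (use assms(2) in simp)
  have init: "absv (F (p * p ^ N) - F p) \<le> absv (qnum q p)" for N
    using block[of "p ^ N" 0] assms(2) by simp
  have step: "absv (F (p * p ^ Suc N) - F (p * p ^ N)) \<le> c ^ Suc N" for N
    using block[of p N] qnum_power_le[of q p "Suc N"] assms(2) near
    unfolding c_def by (simp add: mult.commute)
  have "p_tendsto absv (\<lambda>N. F (p * p ^ N)) (p_lim absv (\<lambda>N. F (p * p ^ N)))"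
    using geometric_converges[OF c, of "\<lambda>N. F (p * p ^ N)"] step by simp
  then have "absv (p_lim absv (\<lambda>N. F (p * p ^ N)) - F p) \<le> absv (qnum q p)"
    using init by (rule p_tendsto_closed_ball)
  moreover have "qnum q 2 \<noteq> 0"
    using qnum_two_nonzero near two_unit[OF assms(2)] abs_p \<open>p \<ge> 3\<close> by simp
  ultimately show "absv (2 / qnum q 2 * qEuler absv p p \<chi> q n - F p) \<le> absv (qnum q p)"
    unfolding qEuler_def F_def by simp
qed

end
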